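(* For $K\in\mathbb{N}$ let $f^{s,K}_{square}(t)=\frac{2s}{K}\sum_{k=1}^K([t-\tfrac{sk}{K}]_++[-t-\tfrac{sk}{K}]_+)$ and define $$f^K_{inner}(\mathbf{x})=\sum_{i=1}^d f^{\sqrt2,K}_{square}\Big(\tfrac{1}{\sqrt2}\begin{bmatrix}\mathbf{e}_i\\ \mathbf{e}_i\end{bmatrix}^\top\mathbf{x}\Big)-1,\qquad \mathbf{x}\in\mathbb{R}^{2d},$$ where $\mathbf{e}_i$ is the $i$-th standard basis vector of $\mathbb{R}^d$. Then $\sup_{\mathbf{x}\in\mathcal{X}_d}|f^K_{inner}(\mathbf{x})-\langle\mathbf{x}^{(1)},\mathbf{x}^{(2)}\rangle|\le2d(\frac1K+\frac1{K^2})$. Further, there is an absolute constant $C$ such that for every $\beta>0$, $\beta^{-1}f^K_{inner}\in\mathcal{N}_{2,2Kd}$ and $R_2(\beta^{-1}f^K_{inner};2Kd)\le C(d\beta^{-1}+\beta^{-2})$.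
   Context: $\mathcal{X}_d=\mathbb{S}^{d-1}\times\mathbb{S}^{d-1}\subset\mathbb{R}^{2d}$, $d\ge2$; $\mathbf{x}^{(1)},\mathbf{x}^{(2)}$ are the first and last $d$ coordinates of $\mathbf{x}$. $\mathcal{N}_{2,\omega}$ is the set of depth-two ReLU networks $f_\phi(\mathbf{x})=\sum_{k=1}^{\omega_1}a_k[\mathbf{w}_k^\top\mathbf{x}+b_k]_++c$ with $\omega_1\le\omega$; $R_2(f;\omega)=\inf\{\|\phi\|^2/2: f_\phi=f\text{ on }\mathcal{X}_d,\ \omega_1\le\omega\}$, where $\|\phi\|^2$ is the sum of squares of all weights and biases. *)

theory Defs
  imports Complex_Main
begin

text \<open>Vectors of R^n are represented as functions nat => real vanishing outside {0..<n}.\<close>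
definition Rvec :: "nat \<Rightarrow> (nat \<Rightarrow> real) set" where
  "Rvec n = {x. \<forall>j\<ge>n. x j = 0}"

definition relu :: "real \<Rightarrow> real" where
  "relu t = max t 0"

text \<open>X_d = S^{d-1} x S^{d-1} in R^{2d}; x^(1) = coordinates 0..d-1, x^(2) = coordinates d..2d-1.\<close>
definition Xd :: "nat \<Rightarrow> (nat \<Rightarrow> real) set" where
  "Xd d = {x \<in> Rvec (2*d). (\<Sum>i<d. (x i)^2) = 1 \<and> (\<Sum>i<d. (x (d+i))^2) = 1}"

definition inner12 :: "nat \<Rightarrow> (nat \<Rightarrow> real) \<Rightarrow> real" where
  "inner12 d x = (\<Sum>i<d. x i * x (d+i))"

text \<open>Parameters of a depth-two ReLU network: width omega_1, outer weights a_k,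
  inner weights w_k (first 2d coordinates), biases b_k, output bias c.\<close>
record net2 =
  width :: nat
  outw :: "nat \<Rightarrow> real"
  inw :: "nat \<Rightarrow> nat \<Rightarrow> real"
  bias :: "nat \<Rightarrow> real"
  outb :: real

definition net_eval :: "nat \<Rightarrow> net2 \<Rightarrow> (nat \<Rightarrow> real) \<Rightarrow> real" where
  "net_eval d \<phi> x =
     (\<Sum>k<width \<phi>. outw \<phi> k * relu ((\<Sum>j<2*d. inw \<phi> k j * x j) + bias \<phi> k)) + outb \<phi>"

definition net_sqnorm :: "nat \<Rightarrow> net2 \<Rightarrow> real" where
  "net_sqnorm d \<phi> =
     (\<Sum>k<width \<phi>. (outw \<phi> k)^2 + (\<Sum>j<2*d. (inw \<phi> k j)^2) + (bias \<phi> k)^2) + (outb \<phi>)^2"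

definition in_N2 :: "nat \<Rightarrow> nat \<Rightarrow> ((nat \<Rightarrow> real) \<Rightarrow> real) \<Rightarrow> bool" where
  "in_N2 d \<omega> f \<longleftrightarrow> (\<exists>\<phi>. width \<phi> \<le> \<omega> \<and> (\<forall>x\<in>Rvec (2*d). net_eval d \<phi> x = f x))"

definition R2 :: "nat \<Rightarrow> nat \<Rightarrow> ((nat \<Rightarrow> real) \<Rightarrow> real) \<Rightarrow> real" where
  "R2 d \<omega> f = Inf {net_sqnorm d \<phi> / 2 | \<phi>. width \<phi> \<le> \<omega> \<and> (\<forall>x\<in>Xd d. net_eval d \<phi> x = f x)}"

definition f_square :: "real \<Rightarrow> nat \<Rightarrow> real \<Rightarrow> real" where
  "f_square s K t = 2 * s / real K *
     (\<Sum>k=1..K. relu (t - s * real k / real K) + relu (- t - s * real k / real K))"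

definition f_inner :: "nat \<Rightarrow> nat \<Rightarrow> (nat \<Rightarrow> real) \<Rightarrow> real" where
  "f_inner d K x = (\<Sum>i<d. f_square (sqrt 2) K ((x i + x (d+i)) / sqrt 2)) - 1"

end

theory Submission
  imports Defs
begin

(* For 0 <= u <= s let v = s j / K be the largest knot not exceeding u.  Then
   (2s/K) sum_k relu (u - s k / K) = u^2 - (u - v)^2 - s v / K, so this ReLU sum
   undershoots u^2 by at most s^2/K^2 + s^2/K, and f_square s K t does the same for t^2
   when |t| <= s.  On X_d the points t_i = (x_i + x_(d+i)) / sqrt 2 satisfy |t_i| <= sqrt 2
   and sum_i t_i^2 = 1 + <x^(1), x^(2)>, so summing the d errors with s = sqrt 2 gives the
   approximation bound.

   f_inner / beta is a sum of 2Kd ReLU units of weight a = 2 sqrt 2 / (K beta) plus the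
   constant -1/beta.  Splitting each weight as sqrt a outside and sqrt a inside the ReLU
   (positive homogeneity) makes every unit cost a (1 + |w|^2 + b^2) <= 4a, hence
   ||phi||^2 <= 16 sqrt 2 d / beta + 1 / beta^2 and C = 12 suffices. *)

lemma relu_mult_nonneg: "p \<ge> 0 \<Longrightarrow> relu (p * z) = p * relu z"
  by (simp add: relu_def max_mult_distrib_left)

lemma relu_diff_add_relu_neg_diff: "c \<ge> 0 \<Longrightarrow> relu (t - c) + relu (- t - c) = relu (\<bar>t\<bar> - c)"
  by (simp add: relu_def abs_if)

lemma sum_relu_knots_eq:
  fixes s u :: real and K j :: nat
  assumes s: "s > 0" and j: "j \<le> K"
    and below: "s * real j / real K \<le> u" and above: "u < s * (real j + 1) / real K"
  shows "(\<Sum>k=1..K. relu (u - s * real k / real K))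
       = real j * u - s / real K * (real j * (real j + 1) / 2)"
proof -
  have active: "relu (u - s * real k / real K) = (if k \<le> j then u - s * real k / real K else 0)" for k
  proof (cases "k \<le> j")
    case True
    then have "s * real k / real K \<le> s * real j / real K"
      using s by (simp add: divide_right_mono)
    then show ?thesis using True below by (simp add: relu_def)
  next
    case False
    then have "s * (real j + 1) / real K \<le> s * real k / real K"
      using s by (simp add: divide_right_mono)
    then show ?thesis using False above by (simp add: relu_def)
  qed
  have "(\<Sum>k=1..K. relu (u - s * real k / real K))
      = (\<Sum>k\<in>{k\<in>{1..K}. k \<le> j}. u - s * real k / real K)"
    unfolding active by (subst sum.inter_filter) auto
  also have "{k\<in>{1..K}. k \<le> j} = {1..j}"
    using j by auto
  also have "(\<Sum>k=1..j. u - s * real k / real K) = real j * u - s / real K * (\<Sum>k=1..j. real k)"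
    by (simp add: sum_subtractf sum_distrib_left sum_divide_distrib)
  also have "(\<Sum>k=1..j. real k) = real j * (real j + 1) / 2"
    using double_gauss_sum_from_Suc_0[of j, where 'a=real] by simp
  finally show ?thesis .
qed

lemma square_minus_sum_relu_bounds:
  fixes s u :: real and K :: nat
  assumes s: "s > 0" and K: "K \<ge> 1" and u0: "0 \<le> u" and us: "u \<le> s"
  defines "e \<equiv> u\<^sup>2 - 2 * s / real K * (\<Sum>k=1..K. relu (u - s * real k / real K))"
  shows "0 \<le> e" and "e \<le> s\<^sup>2 / real K + s\<^sup>2 / (real K)\<^sup>2"
proof -
  have Kp: "real K > 0" using K by simp
  define j where "j = nat \<lfloor>u * real K / s\<rfloor>"
  have "real j = of_int \<lfloor>u * real K / s\<rfloor>"
    unfolding j_def using u0 s by simp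
  then have j_floor: "real j \<le> u * real K / s" "u * real K / s < real j + 1"
    by linarith+
  have "u * real K / s \<le> real K"
    using us s Kp by (simp add: divide_le_eq mult_right_mono)
  then have jK: "j \<le> K" using j_floor by linarith
  have knot_below: "s * real j / real K \<le> u" and knot_above: "u < s * (real j + 1) / real K"
    using j_floor s Kp by (simp_all add: field_simps)
  define v where "v = s * real j / real K"
  have "e = (u - v)\<^sup>2 + s * v / real K"
    unfolding e_def sum_relu_knots_eq[OF s jK knot_below knot_above] v_def using Kp
    by (simp add: field_simps power2_eq_square)
  moreover have "0 \<le> u - v" "u - v \<le> s / real K"
    using knot_below knot_above Kp by (simp_all add: v_def add_divide_distrib distrib_left)
  then have "(u - v)\<^sup>2 \<le> (s / real K)\<^sup>2"
    by (simp add: power_mono)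
  moreover have "v \<le> s"
    using knot_below us by (simp add: v_def)
  then have "s * v / real K \<le> s * s / real K"
    using s by (simp add: divide_right_mono)
  moreover have "0 \<le> v" unfolding v_def using s by simp
  ultimately show "0 \<le> e" and "e \<le> s\<^sup>2 / real K + s\<^sup>2 / (real K)\<^sup>2"
    using s Kp by (auto simp: power2_eq_square power_divide)
qed

lemma f_square_eq_abs:
  assumes "s \<ge> 0"
  shows "f_square s K t = 2 * s / real K * (\<Sum>k=1..K. relu (\<bar>t\<bar> - s * real k / real K))"
  unfolding f_square_def using assms by (simp add: relu_diff_add_relu_neg_diff)

lemma f_square_approx:
  fixes s t :: real
  assumes "s > 0" and "K \<ge> 1" and "\<bar>t\<bar> \<le> s"
  shows "0 \<le> t\<^sup>2 - f_square s K t" and "t\<^sup>2 - f_square s K t \<le> s\<^sup>2 / real K + s\<^sup>2 / (real K)\<^sup>2"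
  using square_minus_sum_relu_bounds[OF assms(1,2) abs_ge_zero assms(3)] assms(1)
  by (simp_all add: f_square_eq_abs)

lemma Xd_abs_add_le:
  assumes "x \<in> Xd d" and "i < d"
  shows "\<bar>x i + x (d + i)\<bar> \<le> 2"
proof -
  have "(x i)\<^sup>2 \<le> 1" "(x (d + i))\<^sup>2 \<le> 1"
    using assms member_le_sum[of i "{..<d}" "\<lambda>i. (x i)\<^sup>2"] member_le_sum[of i "{..<d}" "\<lambda>i. (x (d + i))\<^sup>2"]
    by (auto simp: Xd_def)
  moreover have "(x i + x (d + i))\<^sup>2 \<le> 2 * ((x i)\<^sup>2 + (x (d + i))\<^sup>2)"
    using sum_squares_ge_zero[of "x i - x (d + i)" 0] by (simp add: power2_eq_square algebra_simps)
  ultimately have "(x i + x (d + i))\<^sup>2 \<le> 2\<^sup>2" by simp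
  then show ?thesis
    using abs_le_square_iff[of "x i + x (d + i)" 2] by simp
qed

lemma Xd_sum_square_diag:
  assumes "x \<in> Xd d"
  shows "(\<Sum>i<d. ((x i + x (d + i)) / sqrt 2)\<^sup>2) = 1 + inner12 d x"
proof -
  have "((x i + x (d + i)) / sqrt 2)\<^sup>2 = (x i)\<^sup>2 / 2 + (x (d + i))\<^sup>2 / 2 + x i * x (d + i)" for i
    by (simp add: power_divide power2_eq_square algebra_simps)
  then show ?thesis
    using assms by (simp add: Xd_def inner12_def sum.distrib sum_divide_distrib[symmetric])
qed

lemma f_inner_approx:
  assumes K: "K \<ge> 1" and x: "x \<in> Xd d"
  shows "\<bar>f_inner d K x - inner12 d x\<bar> \<le> 2 * real d * (1 / real K + 1 / (real K)\<^sup>2)"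
proof -
  define t where "t i = (x i + x (d + i)) / sqrt 2" for i
  define err where "err i = (t i)\<^sup>2 - f_square (sqrt 2) K (t i)" for i
  have "\<bar>t i\<bar> \<le> sqrt 2" if "i < d" for i
    using Xd_abs_add_le[OF x that] by (simp add: t_def abs_div divide_le_eq)
  then have err_bounds: "0 \<le> err i" "err i \<le> 2 / real K + 2 / (real K)\<^sup>2" if "i < d" for i
    using f_square_approx[of "sqrt 2" K "t i"] K that by (simp_all add: err_def)
  have "inner12 d x - f_inner d K x = (\<Sum>i<d. err i)"
    using Xd_sum_square_diag[OF x] by (simp add: f_inner_def err_def t_def sum_subtractf)
  moreover have "0 \<le> (\<Sum>i<d. err i)"
    using err_bounds by (intro sum_nonneg) simp
  moreover have "(\<Sum>i<d. err i) \<le> real d * (2 / real K + 2 / (real K)\<^sup>2)"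
    using sum_bounded_above[of "{..<d}" err] err_bounds by simp
  ultimately show ?thesis by (simp add: algebra_simps)
qed

definition balanced_net :: "nat \<Rightarrow> real \<Rightarrow> (nat \<Rightarrow> nat \<Rightarrow> real) \<Rightarrow> (nat \<Rightarrow> real) \<Rightarrow> real \<Rightarrow> net2" where
  "balanced_net n a w b c =
     \<lparr>width = n, outw = (\<lambda>k. sqrt a), inw = (\<lambda>k j. sqrt a * w k j), bias = (\<lambda>k. sqrt a * b k),
      outb = c\<rparr>"

lemma net_eval_balanced_net:
  assumes "a \<ge> 0"
  shows "net_eval d (balanced_net n a w b c) x = a * (\<Sum>k<n. relu ((\<Sum>j<2*d. w k j * x j) + b k)) + c"
proof -
  have "sqrt a * relu ((\<Sum>j<2*d. sqrt a * w k j * x j) + sqrt a * b k)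
      = a * relu ((\<Sum>j<2*d. w k j * x j) + b k)" for k
    using assms by (simp add: mult.assoc sum_distrib_left[symmetric] distrib_left[symmetric] relu_mult_nonneg)
  then show ?thesis
    by (simp add: net_eval_def balanced_net_def sum_distrib_left)
qed

lemma net_sqnorm_balanced_net:
  assumes "a \<ge> 0"
  shows "net_sqnorm d (balanced_net n a w b c) = a * (\<Sum>k<n. 1 + (\<Sum>j<2*d. (w k j)\<^sup>2) + (b k)\<^sup>2) + c\<^sup>2"
  using assms by (simp add: net_sqnorm_def balanced_net_def power_mult_distrib sum_distrib_left distrib_left)

lemma R2_le_net_sqnorm:
  assumes "width \<phi> \<le> \<omega>" and "\<forall>x\<in>Xd d. net_eval d \<phi> x = f x"
  shows "R2 d \<omega> f \<le> net_sqnorm d \<phi> / 2"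
  unfolding R2_def
proof (rule cInf_lower)
  show "net_sqnorm d \<phi> / 2 \<in> {net_sqnorm d \<phi> / 2 | \<phi>. width \<phi> \<le> \<omega> \<and> (\<forall>x\<in>Xd d. net_eval d \<phi> x = f x)}"
    using assms by blast
  have "net_sqnorm d \<psi> \<ge> 0" for \<psi>
    unfolding net_sqnorm_def by (intro add_nonneg_nonneg sum_nonneg) auto
  then show "bdd_below {net_sqnorm d \<phi> / 2 | \<phi>. width \<phi> \<le> \<omega> \<and> (\<forall>x\<in>Xd d. net_eval d \<phi> x = f x)}"
    by (intro bdd_belowI[of _ 0]) fastforce
qed

definition diag_dir :: "nat \<Rightarrow> nat \<Rightarrow> nat \<Rightarrow> real" where
  "diag_dir d i j = (if j = i \<or> j = d + i then 1 / sqrt 2 else 0)"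

lemma sum_diag_dir_mult:
  assumes "i < d"
  shows "(\<Sum>j<2*d. diag_dir d i j * x j) = (x i + x (d + i)) / sqrt 2"
proof -
  have "diag_dir d i j * x j = (if j = i then x i / sqrt 2 else 0) + (if j = d + i then x (d + i) / sqrt 2 else 0)" for j
    using assms by (auto simp: diag_dir_def)
  then show ?thesis
    using assms by (simp add: sum.distrib add_divide_distrib)
qed

lemma sum_diag_dir_square:
  assumes "i < d"
  shows "(\<Sum>j<2*d. (diag_dir d i j)\<^sup>2) = 1"
proof -
  have "(diag_dir d i j)\<^sup>2 = (if j = i then 1 / 2 else 0) + (if j = d + i then 1 / 2 else 0)" for j
    using assms by (auto simp: diag_dir_def power_divide)
  then show ?thesis
    using assms by (simp add: sum.distrib)
qed

lemma sum_lessThan_mult_blocks: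
  fixes f :: "nat \<Rightarrow> 'a::comm_monoid_add"
  shows "(\<Sum>k<n * K. f k) = (\<Sum>j<n. \<Sum>m<K. f (j * K + m))"
proof -
  have "sum f {0 + j * K..<K + j * K} = (\<Sum>m=0..<K. f (m + j * K))" for j
    by (rule sum.shift_bounds_nat_ivl)
  then have "sum f {j * K..<j * K + K} = (\<Sum>m<K. f (j * K + m))" for j
    by (simp add: atLeast0LessThan add.commute)
  then show ?thesis
    using sum.nat_group[of f K n] by simp
qed

lemma sum_lessThan_double:
  fixes f :: "nat \<Rightarrow> 'a::comm_monoid_add"
  shows "(\<Sum>j<2 * d. f j) = (\<Sum>i<d. f i) + (\<Sum>i<d. f (d + i))"
  using sum.atLeastLessThan_concat[of 0 d "2 * d" f] sum.shift_bounds_nat_ivl[of f 0 d d]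
  by (simp add: atLeast0LessThan add.commute mult_2)

lemma f_square_eq_sum_lessThan:
  "f_square s K t = 2 * s / real K *
     (\<Sum>m<K. relu (t - s * real (m + 1) / real K) + relu (- t - s * real (m + 1) / real K))"
  unfolding f_square_def using sum_bounds_lt_plus1[of "\<lambda>k. relu (t - s * real k / real K) + relu (- t - s * real k / real K)" K]
  by simp

(* Unit j K + m (j < 2d, m < K) computes relu (+-t_i - sqrt 2 (m + 1) / K) with
   i = j mod d and sign + iff j < d. *)
definition f_inner_net :: "nat \<Rightarrow> nat \<Rightarrow> real \<Rightarrow> net2" where
  "f_inner_net d K \<beta> =
     balanced_net (2 * K * d) (2 * sqrt 2 / (real K * \<beta>))
       (\<lambda>k j. (if k div K < d then 1 else -1) * diag_dir d (k div K mod d) j)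
       (\<lambda>k. - sqrt 2 * real (k mod K + 1) / real K)
       (- 1 / \<beta>)"

lemma net_eval_f_inner_net:
  assumes K: "K \<ge> 1" and \<beta>: "\<beta> > 0"
  shows "net_eval d (f_inner_net d K \<beta>) x = f_inner d K x / \<beta>"
proof -
  define a where "a = 2 * sqrt 2 / (real K * \<beta>)"
  define t where "t i = (x i + x (d + i)) / sqrt 2" for i
  define g where "g \<sigma> i m = relu (\<sigma> * t i - sqrt 2 * real (m + 1) / real K)" for \<sigma> :: real and i m
  define U where "U k = relu ((\<Sum>j<2*d. (if k div K < d then 1 else -1) * diag_dir d (k div K mod d) j * x j)
      + - sqrt 2 * real (k mod K + 1) / real K)" for k
  have a0: "a \<ge> 0" using \<beta> by (simp add: a_def)
  have U_unit: "U (j * K + m) = g (if j < d then 1 else -1) (j mod d) m" if "j < 2 * d" "m < K" for j m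
  proof -
    have "j mod d < d" using that by (cases "d = 0") auto
    then show ?thesis
      using that by (simp add: U_def g_def t_def mult.assoc sum_distrib_left[symmetric] sum_diag_dir_mult)
  qed
  have "(\<Sum>k<2 * K * d. U k) = (\<Sum>j<2 * d. \<Sum>m<K. U (j * K + m))"
    using sum_lessThan_mult_blocks[of U "2 * d" K] by (simp add: ac_simps)
  also have "\<dots> = (\<Sum>j<2 * d. \<Sum>m<K. g (if j < d then 1 else -1) (j mod d) m)"
    using U_unit by simp
  also have "\<dots> = (\<Sum>i<d. \<Sum>m<K. g 1 i m + g (-1) i m)"
    by (simp add: sum_lessThan_double sum.distrib)
  finally have "a * (\<Sum>k<2 * K * d. U k) = (\<Sum>i<d. f_square (sqrt 2) K (t i)) / \<beta>"
    by (simp add: a_def g_def f_square_eq_sum_lessThan sum_distrib_left sum_divide_distrib)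
  then show ?thesis
    using a0 by (simp add: f_inner_net_def net_eval_balanced_net f_inner_def t_def U_def diff_divide_distrib
        flip: a_def)
qed

lemma net_sqnorm_f_inner_net:
  assumes K: "K \<ge> 1" and \<beta>: "\<beta> > 0"
  shows "net_sqnorm d (f_inner_net d K \<beta>) \<le> 16 * sqrt 2 * real d / \<beta> + 1 / \<beta>\<^sup>2"
proof -
  define a where "a = 2 * sqrt 2 / (real K * \<beta>)"
  have a0: "a \<ge> 0" using \<beta> by (simp add: a_def)
  have unit_cost: "1 + (\<Sum>j<2*d. ((if k div K < d then 1 else -1) * diag_dir d (k div K mod d) j)\<^sup>2)
      + (- sqrt 2 * real (k mod K + 1) / real K)\<^sup>2 \<le> 4" if "k < 2 * K * d" for k
  proof -
    have "k div K mod d < d" using that by (cases "d = 0") auto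
    then have "(\<Sum>j<2*d. ((if k div K < d then 1 else -1) * diag_dir d (k div K mod d) j)\<^sup>2) = 1"
      by (simp add: power_mult_distrib sum_diag_dir_square)
    moreover have "k mod K + 1 \<le> K"
      using K by (simp add: Suc_leI)
    then have "real (k mod K + 1) \<le> real K"
      by linarith
    then have "(real (k mod K + 1) / real K)\<^sup>2 \<le> 1"
      using K by (simp add: power_le_one)
    then have "(- sqrt 2 * real (k mod K + 1) / real K)\<^sup>2 \<le> 2"
      by (simp add: power_mult_distrib power_divide)
    ultimately show ?thesis by simp
  qed
  have "net_sqnorm d (f_inner_net d K \<beta>) \<le> a * (real (2 * K * d) * 4) + 1 / \<beta>\<^sup>2"
    using a0 sum_bounded_above[of "{..<2 * K * d}" _ 4, OF unit_cost]
    by (simp add: f_inner_net_def net_sqnorm_balanced_net power_divide mult_left_mono flip: a_def)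
  also have "a * (real (2 * K * d) * 4) = 16 * sqrt 2 * real d / \<beta>"
    using K by (simp add: a_def)
  finally show ?thesis .
qed

theorem lemma13:
  shows "(\<forall>d K. d \<ge> 2 \<longrightarrow> K \<ge> 1 \<longrightarrow>
            (\<forall>x\<in>Xd d. \<bar>f_inner d K x - inner12 d x\<bar> \<le> 2 * real d * (1 / real K + 1 / (real K)^2)))
       \<and> (\<exists>C::real. \<forall>d K (\<beta>::real). d \<ge> 2 \<longrightarrow> K \<ge> 1 \<longrightarrow> \<beta> > 0 \<longrightarrow>
            in_N2 d (2*K*d) (\<lambda>x. f_inner d K x / \<beta>) \<and>
            R2 d (2*K*d) (\<lambda>x. f_inner d K x / \<beta>) \<le> C * (real d / \<beta> + 1 / \<beta>^2))"
proof (intro conjI allI impI ballI exI[of _ 12])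
  fix d K x assume "K \<ge> (1::nat)" "x \<in> Xd d"
  then show "\<bar>f_inner d K x - inner12 d x\<bar> \<le> 2 * real d * (1 / real K + 1 / (real K)^2)"
    by (rule f_inner_approx)
next
  fix d K :: nat and \<beta> :: real
  assume K: "K \<ge> 1" and \<beta>: "\<beta> > 0"
  have width: "width (f_inner_net d K \<beta>) = 2 * K * d"
    by (simp add: f_inner_net_def balanced_net_def)
  show "in_N2 d (2*K*d) (\<lambda>x. f_inner d K x / \<beta>)"
    unfolding in_N2_def using width net_eval_f_inner_net[OF K \<beta>] by (intro exI[of _ "f_inner_net d K \<beta>"]) simp
  have "R2 d (2*K*d) (\<lambda>x. f_inner d K x / \<beta>) \<le> net_sqnorm d (f_inner_net d K \<beta>) / 2"
    using width net_eval_f_inner_net[OF K \<beta>] by (intro R2_le_net_sqnorm) auto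
  also have "\<dots> \<le> 8 * sqrt 2 * (real d / \<beta>) + 1 / \<beta>\<^sup>2"
    using net_sqnorm_f_inner_net[OF K \<beta>, of d] \<beta> by (simp add: field_simps)
  also have "\<dots> \<le> 12 * (real d / \<beta> + 1 / \<beta>^2)"
  proof -
    have "sqrt 2 \<le> 3 / 2"
      by (rule real_le_lsqrt) (auto simp: power2_eq_square)
    then have "8 * sqrt 2 * (real d / \<beta>) \<le> 12 * (real d / \<beta>)"
      using \<beta> by (intro mult_right_mono) auto
    moreover have "1 / \<beta>\<^sup>2 \<le> 12 / \<beta>\<^sup>2"
      using \<beta> by (simp add: divide_right_mono)
    ultimately show ?thesis
      by (simp add: distrib_left)
  qed
  finally show "R2 d (2*K*d) (\<lambda>x. f_inner d K x / \<beta>) \<le> 12 * (real d / \<beta> + 1 / \<beta>^2)" .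
qed

end
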